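(* Let $S$ be a range set with countable coinitiality, and let $X$ be an ultrametrizable topological space. Then $X$ is compact if and only if the set of all doubling metrics in $\mathrm{Ult}(X,S)$ is a dense $F_{\sigma}$ subset of $(\mathrm{Ult}(X,S),\mathcal{UD}_X^S)$.
   Context: A range set is a subset $S\subseteq[0,\infty)$ with $0\in S$. $S$ has countable coinitiality if there is a strictly decreasing sequence in $S$ converging to $0$. A metric $d$ on $X$ is $S$-valued if $d(X^2)\subseteq S$; an ultrametric is a metric satisfying $d(x,y)\le \max\{d(x,z),d(z,y)\}$ for all $x,y,z$. $\mathrm{Ult}(X,S)$ is the set of all $S$-valued ultrametrics on $X$ generating the topology of $X$. $\mathcal{UD}_X^S(d,e)$ is the infimum of all $\epsilon\in S\cup\{\infty\}$ such that for all $x,y\in X$, $d(x,y)\le\max\{e(x,y),\epsilon\}$ and $e(x,y)\le\max\{d(x,y),\epsilon\}$; this is an ultrametric on $\mathrm{Ult}(X,S)$ (possibly taking value $\infty$), and $\mathrm{Ult}(X,S)$ carries its topology. For a metric space $(X,d)$ and $A\subseteq X$, $\delta_d(A)$ is the diameter and $\alpha_d(A)=\inf\{d(x,y):x\ne y,\ x,y\in A\}$; $(X,d)$ is doubling if there exist $\beta\in(0,\infty)$, $C\in[1,\infty)$ with $\mathrm{card}(A)\le C(\delta_d(A)/\alpha_d(A))^\beta$ for every finite $A\subseteq X$ with at least two points. $F_\sigma$ means a countable union of closed sets. *)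

theory Defs
  imports "HOL-Analysis.Analysis"
begin

definition range_set :: "real set \<Rightarrow> bool" where
  "range_set S \<longleftrightarrow> S \<subseteq> {0..} \<and> 0 \<in> S"

definition countable_coinitiality :: "real set \<Rightarrow> bool" where
  "countable_coinitiality S \<longleftrightarrow>
     (\<exists>f :: nat \<Rightarrow> real. (\<forall>n. f n \<in> S) \<and> (\<forall>n. f (Suc n) < f n) \<and> f \<longlonglongrightarrow> 0)"

definition ultrametric_on :: "'a set \<Rightarrow> ('a \<Rightarrow> 'a \<Rightarrow> real) \<Rightarrow> bool" where
  "ultrametric_on M d \<longleftrightarrow> Metric_space M d \<and>
     (\<forall>x\<in>M. \<forall>y\<in>M. \<forall>z\<in>M. d x y \<le> max (d x z) (d z y))"

definition ultrametrizable_space :: "'a topology \<Rightarrow> bool" where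
  "ultrametrizable_space X \<longleftrightarrow>
     (\<exists>d. ultrametric_on (topspace X) d \<and> Metric_space.mtopology (topspace X) d = X)"

text \<open>Metrics are functions on the whole type, normalised to be 0 off the carrier,
  so that each metric on topspace X is represented by exactly one function.\<close>
definition Ult :: "'a topology \<Rightarrow> real set \<Rightarrow> ('a \<Rightarrow> 'a \<Rightarrow> real) set" where
  "Ult X S = {d. ultrametric_on (topspace X) d
                 \<and> (\<forall>x\<in>topspace X. \<forall>y\<in>topspace X. d x y \<in> S)
                 \<and> (\<forall>x y. x \<notin> topspace X \<or> y \<notin> topspace X \<longrightarrow> d x y = 0)
                 \<and> Metric_space.mtopology (topspace X) d = X}"

definition UD :: "'a topology \<Rightarrow> real set \<Rightarrow> ('a \<Rightarrow> 'a \<Rightarrow> real) \<Rightarrow> ('a \<Rightarrow> 'a \<Rightarrow> real) \<Rightarrow> ereal" where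
  "UD X S d e = Inf {\<epsilon> :: ereal. (\<epsilon> = \<infinity> \<or> (\<exists>s\<in>S. \<epsilon> = ereal s)) \<and>
      (\<forall>x\<in>topspace X. \<forall>y\<in>topspace X.
          ereal (d x y) \<le> max (ereal (e x y)) \<epsilon> \<and> ereal (e x y) \<le> max (ereal (d x y)) \<epsilon>)}"

definition ud_open :: "'a topology \<Rightarrow> real set \<Rightarrow> ('a \<Rightarrow> 'a \<Rightarrow> real) set \<Rightarrow> bool" where
  "ud_open X S U \<longleftrightarrow> U \<subseteq> Ult X S \<and>
     (\<forall>d\<in>U. \<exists>r>0. {e \<in> Ult X S. UD X S d e < ereal r} \<subseteq> U)"

lemma istopology_ud_open: "istopology (ud_open X S)"
  unfolding istopology_def
proof (intro conjI allI impI)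
  fix U V assume U: "ud_open X S U" and V: "ud_open X S V"
  show "ud_open X S (U \<inter> V)"
    unfolding ud_open_def
  proof (intro conjI ballI)
    show "U \<inter> V \<subseteq> Ult X S" using U unfolding ud_open_def by blast
    fix d assume d: "d \<in> U \<inter> V"
    obtain r where r: "r > 0" "{e \<in> Ult X S. UD X S d e < ereal r} \<subseteq> U"
      using U d unfolding ud_open_def by blast
    obtain q where q: "q > 0" "{e \<in> Ult X S. UD X S d e < ereal q} \<subseteq> V"
      using V d unfolding ud_open_def by blast
    have "{e \<in> Ult X S. UD X S d e < ereal (min r q)} \<subseteq> U \<inter> V"
    proof
      fix e assume e: "e \<in> {e \<in> Ult X S. UD X S d e < ereal (min r q)}"
      have "ereal (min r q) \<le> ereal r" "ereal (min r q) \<le> ereal q" by auto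
      then show "e \<in> U \<inter> V" using e r q by (auto dest: order.strict_trans2)
    qed
    then show "\<exists>r>0. {e \<in> Ult X S. UD X S d e < ereal r} \<subseteq> U \<inter> V"
      using r q by (metis min_less_iff_conj)
  qed
next
  fix K assume K: "\<forall>U\<in>K. ud_open X S U"
  show "ud_open X S (\<Union> K)"
    unfolding ud_open_def
  proof (intro conjI ballI)
    show "\<Union> K \<subseteq> Ult X S" using K unfolding ud_open_def by blast
    fix d assume "d \<in> \<Union> K"
    then obtain U where "U \<in> K" "d \<in> U" by blast
    then obtain r where "r > 0" "{e \<in> Ult X S. UD X S d e < ereal r} \<subseteq> U"
      using K unfolding ud_open_def by blast
    then show "\<exists>r>0. {e \<in> Ult X S. UD X S d e < ereal r} \<subseteq> \<Union> K"
      using \<open>U \<in> K\<close> by blast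
  qed
qed

definition ud_topology :: "'a topology \<Rightarrow> real set \<Rightarrow> ('a \<Rightarrow> 'a \<Rightarrow> real) topology" where
  "ud_topology X S = topology (ud_open X S)"

definition diam_d :: "('a \<Rightarrow> 'a \<Rightarrow> real) \<Rightarrow> 'a set \<Rightarrow> real" where
  "diam_d d A = Sup {d x y | x y. x \<in> A \<and> y \<in> A}"

definition sep_d :: "('a \<Rightarrow> 'a \<Rightarrow> real) \<Rightarrow> 'a set \<Rightarrow> real" where
  "sep_d d A = Inf {d x y | x y. x \<in> A \<and> y \<in> A \<and> x \<noteq> y}"

definition doubling_on :: "'a set \<Rightarrow> ('a \<Rightarrow> 'a \<Rightarrow> real) \<Rightarrow> bool" where
  "doubling_on M d \<longleftrightarrow> (\<exists>\<beta>::real. \<exists>C::real. 0 < \<beta> \<and> 1 \<le> C \<and>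
     (\<forall>A. A \<subseteq> M \<longrightarrow> finite A \<longrightarrow> 2 \<le> card A \<longrightarrow>
        real (card A) \<le> C * (diam_d d A / sep_d d A) powr \<beta>))"

end

theory Submission
  imports Defs
begin

(* Doubling with integer constants C and exponent b is a closed condition on Ult(X,S): a violation
   is witnessed by finitely many distances, and UD-close metrics agree on all distances above their
   UD-distance. Hence the doubling metrics form an F_sigma set.

   If X is compact, a metric e is approximated by keeping e above a small scale s in S and, below s,
   using tau(first index at which two points are separated by a fixed sequence of clopen balls),
   where tau is a sequence in S that at least halves at each step. On an s-ball of e the points of
   a finite set with first differences in a window i..j number at most 2^(j-i+1), while their
   aspect ratio is at least 2^(j-i); covering X by finitely many s-balls gives the doubling bound.

   If X is not compact, it contains a closed discrete sequence, and some metric in Ult(X,S) makes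
   it equidistant. Every metric UD-close to that one keeps it equidistant, and an infinite
   equidistant set is not doubling, so the doubling metrics are not dense. *)

section \<open>The topology of \<open>UD\<close>\<close>

lemma openin_ud_topology: "openin (ud_topology X S) = ud_open X S"
  by (simp add: ud_topology_def istopology_ud_open)

lemma topspace_ud_topology: "topspace (ud_topology X S) = Ult X S"
proof -
  have "ud_open X S (Ult X S)"
    unfolding ud_open_def by (auto intro: exI[of _ 1])
  moreover have "U \<subseteq> Ult X S" if "ud_open X S U" for U
    using that unfolding ud_open_def by auto
  ultimately show ?thesis
    unfolding topspace_def openin_ud_topology by blast
qed

lemma Ult_Metric_space: "d \<in> Ult X S \<Longrightarrow> Metric_space (topspace X) d"
  unfolding Ult_def ultrametric_on_def by auto

lemma UD_lessE:
  assumes "UD X S d e < ereal r"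
  obtains s where "s \<in> S" "s < r"
    "\<And>x y. x \<in> topspace X \<Longrightarrow> y \<in> topspace X \<Longrightarrow> d x y \<le> max (e x y) s \<and> e x y \<le> max (d x y) s"
proof -
  from assms obtain \<epsilon> where \<epsilon>: "\<epsilon> = \<infinity> \<or> (\<exists>s\<in>S. \<epsilon> = ereal s)" "\<epsilon> < ereal r"
    "\<forall>x\<in>topspace X. \<forall>y\<in>topspace X.
       ereal (d x y) \<le> max (ereal (e x y)) \<epsilon> \<and> ereal (e x y) \<le> max (ereal (d x y)) \<epsilon>"
    unfolding UD_def Inf_less_iff by blast
  then obtain s where "s \<in> S" "\<epsilon> = ereal s" by auto
  with \<epsilon> show thesis
    by (intro that[of s]) (auto simp del: ereal_max simp add: ereal_max[symmetric])
qed

lemma UD_le_ereal: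
  assumes "s \<in> S"
    and "\<And>x y. x \<in> topspace X \<Longrightarrow> y \<in> topspace X \<Longrightarrow> d x y \<le> max (e x y) s \<and> e x y \<le> max (d x y) s"
  shows "UD X S d e \<le> ereal s"
  unfolding UD_def
  by (rule Inf_lower) (use assms in \<open>auto simp del: ereal_max simp add: ereal_max[symmetric]\<close>)

lemma UD_less_imp_eq_large:
  assumes "UD X S d e < ereal r" "x \<in> topspace X" "y \<in> topspace X" "r \<le> d x y"
  shows "e x y = d x y"
proof -
  obtain s where "s < r" "d x y \<le> max (e x y) s" "e x y \<le> max (d x y) s"
    using UD_lessE[OF assms(1)] assms(2,3) by metis
  with assms(4) show ?thesis by (auto simp: max_def split: if_splits)
qed

lemma openin_ud_topology_if_large_distances_determine:
  assumes "U \<subseteq> Ult X S"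
    and "\<And>d. d \<in> U \<Longrightarrow> \<exists>r>0. \<forall>e\<in>Ult X S.
           (\<forall>x\<in>topspace X. \<forall>y\<in>topspace X. r \<le> d x y \<longrightarrow> e x y = d x y) \<longrightarrow> e \<in> U"
  shows "openin (ud_topology X S) U"
  unfolding openin_ud_topology ud_open_def
proof (intro conjI ballI)
  fix d assume "d \<in> U"
  then obtain r where "r > 0" and r: "\<And>e. e \<in> Ult X S \<Longrightarrow>
      (\<forall>x\<in>topspace X. \<forall>y\<in>topspace X. r \<le> d x y \<longrightarrow> e x y = d x y) \<Longrightarrow> e \<in> U"
    using assms(2) by blast
  have "{e \<in> Ult X S. UD X S d e < ereal r} \<subseteq> U"
    using r UD_less_imp_eq_large[of X S d _ r] by auto
  with \<open>r > 0\<close> show "\<exists>r>0. {e \<in> Ult X S. UD X S d e < ereal r} \<subseteq> U" by blast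
qed (use assms(1) in blast)

section \<open>Aspect ratios; doubling metrics form an \<open>F\<^sub>\<sigma>\<close> set\<close>

lemma two_le_card_obtains:
  assumes "2 \<le> card A"
  obtains x y where "x \<in> A" "y \<in> A" "x \<noteq> y"
proof -
  have "finite A" using assms card.infinite by force
  with assms have "\<not> (\<forall>x\<in>A. \<forall>y\<in>A. x = y)" by (simp add: card_le_Suc0_iff_eq[symmetric])
  then show thesis using that by blast
qed

lemma finite_pair_values:
  assumes "finite A"
  shows "finite {d x y | x y. x \<in> A \<and> y \<in> A \<and> P x y}"
proof (rule finite_subset)
  show "{d x y | x y. x \<in> A \<and> y \<in> A \<and> P x y} \<subseteq> case_prod d ` (A \<times> A)" by force
qed (simp add: assms)

lemma finite_pair_values_all: "finite A \<Longrightarrow> finite {d x y | x y. x \<in> A \<and> y \<in> A}"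
  using finite_pair_values[of A d "\<lambda>_ _. True"] by simp

lemma diam_d_ge: "finite A \<Longrightarrow> x \<in> A \<Longrightarrow> y \<in> A \<Longrightarrow> d x y \<le> diam_d d A"
  unfolding diam_d_def by (rule cSup_upper) (blast, simp add: bdd_above_finite finite_pair_values_all)

lemma sep_d_le: "finite A \<Longrightarrow> x \<in> A \<Longrightarrow> y \<in> A \<Longrightarrow> x \<noteq> y \<Longrightarrow> sep_d d A \<le> d x y"
  unfolding sep_d_def by (rule cInf_lower) (blast, simp add: bdd_below_finite finite_pair_values)

lemma sep_d_pos:
  assumes "Metric_space M d" "A \<subseteq> M" "finite A" "2 \<le> card A"
  shows "0 < sep_d d A"
proof -
  let ?Q = "{d x y | x y. x \<in> A \<and> y \<in> A \<and> x \<noteq> y}"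
  obtain x y where "x \<in> A" "y \<in> A" "x \<noteq> y" using assms(4) by (rule two_le_card_obtains)
  then have "?Q \<noteq> {}" by blast
  moreover have "finite ?Q" using assms(3) by (rule finite_pair_values)
  moreover have "0 < q" if "q \<in> ?Q" for q
    using that assms(2) Metric_space.mdist_pos_less[OF assms(1)] by blast
  ultimately show ?thesis unfolding sep_d_def by (simp add: cInf_eq_Min)
qed

definition aspect_ratio :: "('a \<Rightarrow> 'a \<Rightarrow> real) \<Rightarrow> 'a set \<Rightarrow> real" where
  "aspect_ratio d A = diam_d d A / sep_d d A"

lemma aspect_ratio_ge_1:
  assumes "Metric_space M d" "A \<subseteq> M" "finite A" "2 \<le> card A"
  shows "1 \<le> aspect_ratio d A"
proof -
  obtain x y where xy: "x \<in> A" "y \<in> A" "x \<noteq> y" using assms(4) by (rule two_le_card_obtains)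
  have "sep_d d A \<le> d x y" using assms(3) xy by (rule sep_d_le)
  also have "\<dots> \<le> diam_d d A" using assms(3) xy(1,2) by (rule diam_d_ge)
  finally show ?thesis unfolding aspect_ratio_def using sep_d_pos[OF assms] by simp
qed

lemma aspect_ratio_mono:
  assumes "Metric_space M d" "A \<subseteq> M" "finite A" "B \<subseteq> A" "2 \<le> card B"
  shows "aspect_ratio d B \<le> aspect_ratio d A"
proof -
  have "finite B" using assms(3,4) by (rule finite_subset[rotated])
  have "card B \<le> card A" using assms(3,4) by (rule card_mono)
  obtain x y where xy: "x \<in> B" "y \<in> B" "x \<noteq> y" using assms(5) by (rule two_le_card_obtains)
  have "diam_d d B \<le> diam_d d A"
    unfolding diam_d_def
  proof (rule cSup_mono)
    show "bdd_above {d x y |x y. x \<in> A \<and> y \<in> A}"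
      by (simp add: bdd_above_finite finite_pair_values_all assms(3))
  qed (use xy assms(4) in blast)+
  moreover have "sep_d d A \<le> sep_d d B"
    unfolding sep_d_def
  proof (rule cInf_mono)
    show "bdd_below {d x y |x y. x \<in> A \<and> y \<in> A \<and> x \<noteq> y}"
      by (simp add: bdd_below_finite finite_pair_values assms(3))
  qed (use xy assms(4) in blast)+
  moreover have "0 < sep_d d A"
    using assms(5) \<open>card B \<le> card A\<close> by (intro sep_d_pos[OF assms(1-3)]) linarith
  moreover have "0 \<le> diam_d d B"
    using Metric_space.nonneg[OF assms(1)] diam_d_ge[OF \<open>finite B\<close> xy(1,2)] by (metis order_trans)
  ultimately show ?thesis unfolding aspect_ratio_def by (meson frac_le order_trans)
qed

lemma aspect_ratio_cong:
  assumes "\<And>x y. x \<in> A \<Longrightarrow> y \<in> A \<Longrightarrow> e x y = d x y"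
  shows "aspect_ratio e A = aspect_ratio d A"
proof -
  have "{e x y | x y. x \<in> A \<and> y \<in> A \<and> P x y} = {d x y | x y. x \<in> A \<and> y \<in> A \<and> P x y}"
    for P :: "'a \<Rightarrow> 'a \<Rightarrow> bool"
    using assms by (intro Collect_cong) (metis (no_types, lifting))
  from this[of "\<lambda>_ _. True"] this[of "(\<noteq>)"] show ?thesis
    unfolding aspect_ratio_def diam_d_def sep_d_def by simp
qed

lemma aspect_ratio_equidistant:
  assumes "finite A" "2 \<le> card A" "0 < c"
    and "\<And>x y. x \<in> A \<Longrightarrow> y \<in> A \<Longrightarrow> d x y = (if x = y then 0 else c)"
  shows "aspect_ratio d A = 1"
proof -
  obtain x y where xy: "x \<in> A" "y \<in> A" "x \<noteq> y" using assms(2) by (rule two_le_card_obtains)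
  have "{d x y | x y. x \<in> A \<and> y \<in> A} = {0, c}"
    using xy assms(4) by fastforce
  moreover have "{d x y | x y. x \<in> A \<and> y \<in> A \<and> x \<noteq> y} = {c}"
    using xy assms(4) by fastforce
  ultimately show ?thesis
    unfolding aspect_ratio_def diam_d_def sep_d_def using assms(3) by (simp add: cSup_insert sup_max)
qed

definition doubling_bound :: "'a set \<Rightarrow> ('a \<Rightarrow> 'a \<Rightarrow> real) \<Rightarrow> real \<Rightarrow> real \<Rightarrow> bool" where
  "doubling_bound M d C \<beta> \<longleftrightarrow> (\<forall>A. A \<subseteq> M \<longrightarrow> finite A \<longrightarrow> 2 \<le> card A \<longrightarrow>
     real (card A) \<le> C * aspect_ratio d A powr \<beta>)"

lemma doubling_on_iff_bound:
  "doubling_on M d \<longleftrightarrow> (\<exists>\<beta> C. 0 < \<beta> \<and> 1 \<le> C \<and> doubling_bound M d C \<beta>)"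
  by (simp add: doubling_on_def doubling_bound_def aspect_ratio_def)

lemma doubling_bound_mono:
  assumes "Metric_space M d" "doubling_bound M d C \<beta>" "0 \<le> C" "C \<le> C'" "\<beta> \<le> \<beta>'"
  shows "doubling_bound M d C' \<beta>'"
  unfolding doubling_bound_def
proof (intro allI impI)
  fix A assume A: "A \<subseteq> M" "finite A" "2 \<le> card A"
  have "1 \<le> aspect_ratio d A" using aspect_ratio_ge_1[OF assms(1) A] .
  then have "aspect_ratio d A powr \<beta> \<le> aspect_ratio d A powr \<beta>'"
    using assms(5) by (rule powr_mono[rotated])
  then have "C * aspect_ratio d A powr \<beta> \<le> C' * aspect_ratio d A powr \<beta>'"
    using assms(3,4) by (intro mult_mono) simp_all
  moreover have "real (card A) \<le> C * aspect_ratio d A powr \<beta>"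
    using assms(2) A unfolding doubling_bound_def by blast
  ultimately show "real (card A) \<le> C' * aspect_ratio d A powr \<beta>'" by linarith
qed

lemma closedin_doubling_bound:
  "closedin (ud_topology X S) {d \<in> Ult X S. doubling_bound (topspace X) d C \<beta>}"
proof -
  let ?U = "Ult X S - {d \<in> Ult X S. doubling_bound (topspace X) d C \<beta>}"
  have "openin (ud_topology X S) ?U"
  proof (rule openin_ud_topology_if_large_distances_determine)
    fix d assume "d \<in> ?U"
    then have d: "d \<in> Ult X S" and "\<not> doubling_bound (topspace X) d C \<beta>" by auto
    then obtain A where A: "A \<subseteq> topspace X" "finite A" "2 \<le> card A"
      and violated: "\<not> real (card A) \<le> C * aspect_ratio d A powr \<beta>"
      unfolding doubling_bound_def by blast
    have ms: "Metric_space (topspace X) d" using d by (rule Ult_Metric_space)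
    have "e \<in> ?U"
      if e: "e \<in> Ult X S"
        and agree: "\<forall>x\<in>topspace X. \<forall>y\<in>topspace X. sep_d d A \<le> d x y \<longrightarrow> e x y = d x y"
      for e
    proof -
      have "e x y = d x y" if "x \<in> A" "y \<in> A" for x y
      proof (cases "x = y")
        case True
        with that A(1) show ?thesis
          using Metric_space.mdist_zero[OF ms] Metric_space.mdist_zero[OF Ult_Metric_space[OF e]] by auto
      next
        case False
        then have "sep_d d A \<le> d x y" using A(2) that by (intro sep_d_le)
        then show ?thesis using that A(1) agree by blast
      qed
      then have "aspect_ratio e A = aspect_ratio d A" by (rule aspect_ratio_cong)
      then have "\<not> doubling_bound (topspace X) e C \<beta>"
        using A violated unfolding doubling_bound_def by metis
      with e show ?thesis by blast
    qed
    then show "\<exists>r>0. \<forall>e\<in>Ult X S. (\<forall>x\<in>topspace X. \<forall>y\<in>topspace X. r \<le> d x y \<longrightarrow> e x y = d x y)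
        \<longrightarrow> e \<in> ?U"
      using sep_d_pos[OF ms A] by blast
  qed (rule Diff_subset)
  then show ?thesis unfolding closedin_def topspace_ud_topology by (simp add: Diff_Diff_Int)
qed

lemma fsigma_in_doubling_metrics:
  "fsigma_in (ud_topology X S) {d \<in> Ult X S. doubling_on (topspace X) d}"
proof -
  define D where "D b c = {d \<in> Ult X S. doubling_bound (topspace X) d (Suc c) (Suc b)}" for b c :: nat
  have "{d \<in> Ult X S. doubling_on (topspace X) d} = (\<Union>(b, c). D b c)"
  proof (intro set_eqI iffI)
    fix d assume "d \<in> {d \<in> Ult X S. doubling_on (topspace X) d}"
    then obtain \<beta> C where d: "d \<in> Ult X S" "1 \<le> C" "doubling_bound (topspace X) d C \<beta>"
      unfolding doubling_on_iff_bound by blast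
    have "\<beta> \<le> Suc (nat \<lceil>\<beta>\<rceil>)" "C \<le> Suc (nat \<lceil>C\<rceil>)" by linarith+
    then have "doubling_bound (topspace X) d (Suc (nat \<lceil>C\<rceil>)) (Suc (nat \<lceil>\<beta>\<rceil>))"
      using doubling_bound_mono[OF Ult_Metric_space[OF d(1)] d(3)] d(2) by simp
    with d(1) show "d \<in> (\<Union>(b, c). D b c)" unfolding D_def by blast
  next
    fix d assume "d \<in> (\<Union>(b, c). D b c)"
    then obtain b c where "d \<in> Ult X S" "doubling_bound (topspace X) d (Suc c) (Suc b)"
      unfolding D_def by blast
    moreover have "0 < real (Suc b)" "1 \<le> real (Suc c)" by simp_all
    ultimately show "d \<in> {d \<in> Ult X S. doubling_on (topspace X) d}"
      unfolding doubling_on_iff_bound by blast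
  qed
  moreover have "closedin (ud_topology X S) (D b c)" for b c
    unfolding D_def by (rule closedin_doubling_bound)
  ultimately show ?thesis
    unfolding fsigma_in_def union_of_def by (intro exI[of _ "range (case_prod D)"]) auto
qed

section \<open>Ultrametrics\<close>

lemma ultrametric_onI:
  assumes "\<And>x y. 0 \<le> d x y" "\<And>x y. d x y = d y x"
    and "\<And>x y. x \<in> M \<Longrightarrow> y \<in> M \<Longrightarrow> d x y = 0 \<longleftrightarrow> x = y"
    and "\<And>x y z. x \<in> M \<Longrightarrow> y \<in> M \<Longrightarrow> z \<in> M \<Longrightarrow> d x y \<le> max (d x z) (d z y)"
  shows "ultrametric_on M d"
  unfolding ultrametric_on_def
proof (intro conjI ballI)
  show "Metric_space M d"
  proof
    fix x y z assume "x \<in> M" "y \<in> M" "z \<in> M"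
    then have "d x z \<le> max (d x y) (d y z)" using assms(4)[of x z y] by blast
    then show "d x z \<le> d x y + d y z" using assms(1)[of x y] assms(1)[of y z] by linarith
  qed (use assms in auto)
qed (use assms in auto)

lemma ultrametric_on_Metric_space: "ultrametric_on M d \<Longrightarrow> Metric_space M d"
  unfolding ultrametric_on_def by blast

lemma ultrametric_onD:
  "ultrametric_on M d \<Longrightarrow> x \<in> M \<Longrightarrow> y \<in> M \<Longrightarrow> z \<in> M \<Longrightarrow> d x y \<le> max (d x z) (d z y)"
  unfolding ultrametric_on_def by blast

lemma mtopology_eq_iff_locally_controlled:
  assumes "Metric_space M d" "Metric_space M e"
  shows "Metric_space.mtopology M d = Metric_space.mtopology M e \<longleftrightarrow>
    (\<forall>x\<in>M. \<forall>\<epsilon>>0. \<exists>\<delta>>0. \<forall>y\<in>M. e x y < \<delta> \<longrightarrow> d x y < \<epsilon>) \<and>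
    (\<forall>x\<in>M. \<forall>\<epsilon>>0. \<exists>\<delta>>0. \<forall>y\<in>M. d x y < \<delta> \<longrightarrow> e x y < \<epsilon>)"
proof -
  interpret D: Metric_space M d by (rule assms(1))
  interpret E: Metric_space M e by (rule assms(2))
  have "D.mtopology = E.mtopology \<longleftrightarrow> continuous_map E.mtopology D.mtopology id
      \<and> continuous_map D.mtopology E.mtopology id"
    unfolding topology_eq
    using topology_finer_continuous_id[of D.mtopology E.mtopology]
      topology_finer_continuous_id[of E.mtopology D.mtopology] by auto
  moreover have "continuous_map E.mtopology D.mtopology id \<longleftrightarrow>
      (\<forall>x\<in>M. \<forall>\<epsilon>>0. \<exists>\<delta>>0. \<forall>y\<in>M. e x y < \<delta> \<longrightarrow> d x y < \<epsilon>)"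
    unfolding E.metric_continuous_map[OF assms(1)] by (simp add: Ball_def imp_conjL)
  moreover have "continuous_map D.mtopology E.mtopology id \<longleftrightarrow>
      (\<forall>x\<in>M. \<forall>\<epsilon>>0. \<exists>\<delta>>0. \<forall>y\<in>M. d x y < \<delta> \<longrightarrow> e x y < \<epsilon>)"
    unfolding D.metric_continuous_map[OF assms(2)] by (simp add: Ball_def imp_conjL)
  ultimately show ?thesis by simp
qed

lemma ultrametric_mball_subset:
  assumes "ultrametric_on M d" "r \<le> q"
    and "w \<in> Metric_space.mball M d a r" "w \<in> Metric_space.mball M d b q"
  shows "Metric_space.mball M d a r \<subseteq> Metric_space.mball M d b q"
proof
  interpret Metric_space M d using assms(1) by (rule ultrametric_on_Metric_space)
  fix y assume y: "y \<in> mball a r"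
  have "d w y \<le> max (d w a) (d a y)" using assms(1,3) y by (intro ultrametric_onD) auto
  moreover have "d w a < r" "d a y < r" using assms(3) y by (auto simp: commute)
  ultimately have "d w y < r" by (metis max_less_iff_conj le_less_trans)
  moreover have "d b y \<le> max (d b w) (d w y)" using assms(1,3,4) y by (intro ultrametric_onD) auto
  ultimately show "y \<in> mball b q" using assms(2,4) y by auto
qed

lemma ultrametric_mball_eq:
  assumes "ultrametric_on M d" "z \<in> Metric_space.mball M d a r"
  shows "Metric_space.mball M d z r = Metric_space.mball M d a r"
proof -
  interpret Metric_space M d using assms(1) by (rule ultrametric_on_Metric_space)
  have "z \<in> mball z r" using assms(2) by (auto intro: le_less_trans[OF nonneg])
  then show ?thesis using assms by (intro subset_antisym ultrametric_mball_subset) auto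
qed

lemma ultrametric_closedin_mball:
  assumes "ultrametric_on M d"
  shows "closedin (Metric_space.mtopology M d) (Metric_space.mball M d a r)"
proof -
  interpret Metric_space M d using assms by (rule ultrametric_on_Metric_space)
  have "\<exists>\<rho>>0. mball w \<rho> \<subseteq> M - mball a r" if "w \<in> M - mball a r" for w
  proof (cases "0 < r")
    case True
    have "mball w r \<inter> mball a r = {}"
    proof (rule ccontr)
      assume "mball w r \<inter> mball a r \<noteq> {}"
      then obtain y where "y \<in> mball w r" "y \<in> mball a r" by blast
      then have "mball w r \<subseteq> mball a r" by (rule ultrametric_mball_subset[OF assms order_refl])
      moreover have "w \<in> mball w r" using that \<open>0 < r\<close> by simp
      ultimately show False using that by blast
    qed
    with True show ?thesis using mball_subset_mspace by blast
  next
    case False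
    have "\<not> d a y < r" for y using False nonneg[of a y] by linarith
    then have "mball a r = {}" by auto
    then show ?thesis using mball_subset_mspace[of w 1] by (intro exI[of _ 1]) auto
  qed
  then have "openin mtopology (M - mball a r)" unfolding openin_mtopology by blast
  then show ?thesis by (simp add: closedin_def mball_subset_mspace)
qed

section \<open>Rounding and capping ultrametrics\<close>

definition decreasing_to_zero :: "(nat \<Rightarrow> real) \<Rightarrow> bool" where
  "decreasing_to_zero \<sigma> \<longleftrightarrow> (\<forall>n. \<sigma> (Suc n) < \<sigma> n) \<and> \<sigma> \<longlonglongrightarrow> 0"

lemma countable_coinitiality_obtains:
  assumes "countable_coinitiality S"
  obtains \<sigma> where "decreasing_to_zero \<sigma>" "\<And>n. \<sigma> n \<in> S"
  using assms unfolding countable_coinitiality_def decreasing_to_zero_def by blast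

context
  fixes \<sigma> :: "nat \<Rightarrow> real"
  assumes \<sigma>: "decreasing_to_zero \<sigma>"
begin

lemma decreasing_to_zero_less: "n < m \<Longrightarrow> \<sigma> m < \<sigma> n"
  using \<sigma> lift_Suc_mono_less[of "\<lambda>n. - \<sigma> n" n m] unfolding decreasing_to_zero_def by simp

lemma decreasing_to_zero_le: "n \<le> m \<Longrightarrow> \<sigma> m \<le> \<sigma> n"
  using decreasing_to_zero_less[of n m] by (cases "n = m") auto

lemma decreasing_to_zero_pos: "0 < \<sigma> n"
proof -
  have "\<sigma> \<longlonglongrightarrow> 0" using \<sigma> unfolding decreasing_to_zero_def by blast
  moreover have "\<forall>\<^sub>F m in sequentially. \<sigma> m \<le> \<sigma> (Suc n)"
    using decreasing_to_zero_le[of "Suc n"] by (auto simp: eventually_sequentially)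
  ultimately have "0 \<le> \<sigma> (Suc n)" by (rule tendsto_upperbound) simp
  also have "\<dots> < \<sigma> n" using \<sigma> unfolding decreasing_to_zero_def by blast
  finally show ?thesis .
qed

lemma decreasing_to_zero_ex_less: "0 < t \<Longrightarrow> \<exists>n. \<sigma> n < t"
  using \<sigma> unfolding decreasing_to_zero_def by (metis LIMSEQ_le_const not_le)

definition round_down :: "real \<Rightarrow> real" where
  "round_down t = (if t \<le> 0 then 0 else \<sigma> (LEAST n. \<sigma> n < t))"

lemma round_down_below: "0 < t \<Longrightarrow> round_down t = \<sigma> (LEAST n. \<sigma> n < t) \<and> \<sigma> (LEAST n. \<sigma> n < t) < t"
  using LeastI_ex[OF decreasing_to_zero_ex_less] unfolding round_down_def by simp

lemma round_down_nonneg: "0 \<le> round_down t"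
  unfolding round_down_def using decreasing_to_zero_pos by (simp add: less_imp_le)

lemma round_down_pos: "0 < t \<Longrightarrow> 0 < round_down t"
  unfolding round_down_def using decreasing_to_zero_pos by simp

lemma round_down_zero: "t \<le> 0 \<Longrightarrow> round_down t = 0"
  unfolding round_down_def by simp

lemma round_down_le: "0 \<le> t \<Longrightarrow> round_down t \<le> t"
  using round_down_below[of t] unfolding round_down_def by (cases "t \<le> 0") auto

lemma round_down_above_first: "\<sigma> 0 < t \<Longrightarrow> round_down t = \<sigma> 0"
  using decreasing_to_zero_pos[of 0] unfolding round_down_def by (simp add: Least_eq_0)

lemma round_down_in: "round_down t \<in> insert 0 (range \<sigma>)"
  unfolding round_down_def by simp

lemma round_down_mono: "mono round_down"
proof (rule monoI)
  fix t t' :: real assume "t \<le> t'"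
  show "round_down t \<le> round_down t'"
  proof (cases "t \<le> 0")
    case True
    then show ?thesis using round_down_nonneg[of t'] by (simp add: round_down_zero)
  next
    case False
    with \<open>t \<le> t'\<close> have "\<sigma> (LEAST n. \<sigma> n < t) < t'" using round_down_below[of t] by simp
    then have "(LEAST n. \<sigma> n < t') \<le> (LEAST n. \<sigma> n < t)" by (rule Least_le)
    then show ?thesis
      using False \<open>t \<le> t'\<close> unfolding round_down_def by (simp add: decreasing_to_zero_le)
  qed
qed

lemma round_down_less_imp_le: "round_down t < \<sigma> n \<Longrightarrow> t \<le> \<sigma> n"
proof (rule ccontr)
  assume "round_down t < \<sigma> n" "\<not> t \<le> \<sigma> n"
  then have "0 < t" "(LEAST n. \<sigma> n < t) \<le> n"
    using decreasing_to_zero_pos[of n] by (auto intro: Least_le)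
  then have "\<sigma> n \<le> round_down t" unfolding round_down_def by (simp add: decreasing_to_zero_le)
  with \<open>round_down t < \<sigma> n\<close> show False by simp
qed

end

lemma ultrametric_on_comp:
  assumes "ultrametric_on M d" "mono f" "f 0 = 0" "\<And>t. 0 < t \<Longrightarrow> 0 < f t"
  shows "ultrametric_on M (\<lambda>x y. f (d x y))"
proof -
  interpret Metric_space M d using assms(1) by (rule ultrametric_on_Metric_space)
  show ?thesis
  proof (rule ultrametric_onI)
    show "0 \<le> f (d x y)" for x y using monoD[OF assms(2) nonneg[of x y]] assms(3) by simp
    show "f (d x y) = f (d y x)" for x y by (simp add: commute)
    show "f (d x y) = 0 \<longleftrightarrow> x = y" if "x \<in> M" "y \<in> M" for x y
      using that assms(3) assms(4)[of "d x y"] mdist_pos_less[of x y] by (cases "x = y") auto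
    show "f (d x y) \<le> max (f (d x z)) (f (d z y))" if "x \<in> M" "y \<in> M" "z \<in> M" for x y z
      using monoD[OF assms(2) ultrametric_onD[OF assms(1) that]] by (simp add: max_of_mono[OF assms(2)])
  qed
qed

lemma mtopology_comp:
  assumes "Metric_space M d" "Metric_space M (\<lambda>x y. f (d x y))"
    and "\<And>t. 0 \<le> t \<Longrightarrow> f t \<le> t"
    and "\<And>\<epsilon>. 0 < \<epsilon> \<Longrightarrow> \<exists>\<delta>>0. \<forall>t\<ge>0. f t < \<delta> \<longrightarrow> t < \<epsilon>"
  shows "Metric_space.mtopology M (\<lambda>x y. f (d x y)) = Metric_space.mtopology M d"
  unfolding mtopology_eq_iff_locally_controlled[OF assms(2,1)]
proof (intro conjI ballI allI impI)
  fix x and \<epsilon> :: real assume "0 < \<epsilon>"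
  have "f (d x y) < \<epsilon>" if "d x y < \<epsilon>" for y
    using assms(3)[OF Metric_space.nonneg[OF assms(1)]] that by (meson le_less_trans)
  with \<open>0 < \<epsilon>\<close> show "\<exists>\<delta>>0. \<forall>y\<in>M. d x y < \<delta> \<longrightarrow> f (d x y) < \<epsilon>" by blast
  show "\<exists>\<delta>>0. \<forall>y\<in>M. f (d x y) < \<delta> \<longrightarrow> d x y < \<epsilon>"
    using assms(4)[OF \<open>0 < \<epsilon>\<close>] Metric_space.nonneg[OF assms(1)] by blast
qed

definition class_capped_dist :: "'a set \<Rightarrow> ('a \<Rightarrow> 'b) \<Rightarrow> real \<Rightarrow> ('a \<Rightarrow> 'a \<Rightarrow> real) \<Rightarrow> 'a \<Rightarrow> 'a \<Rightarrow> real" where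
  "class_capped_dist M cls c d x y =
     (if x \<in> M \<and> y \<in> M then if cls x = cls y then min (d x y) c else c else 0)"

lemma class_capped_dist_le: "0 \<le> c \<Longrightarrow> class_capped_dist M cls c d x y \<le> c"
  unfolding class_capped_dist_def by simp

lemma ultrametric_on_class_capped_dist:
  assumes "ultrametric_on M d" "0 < c"
  shows "ultrametric_on M (class_capped_dist M cls c d)"
proof -
  interpret Metric_space M d using assms(1) by (rule ultrametric_on_Metric_space)
  show ?thesis
  proof (rule ultrametric_onI)
    show "0 \<le> class_capped_dist M cls c d x y" for x y
      using assms(2) unfolding class_capped_dist_def by simp
    show "class_capped_dist M cls c d x y = class_capped_dist M cls c d y x" for x y
      unfolding class_capped_dist_def by (auto simp: commute)
    show "class_capped_dist M cls c d x y = 0 \<longleftrightarrow> x = y" if "x \<in> M" "y \<in> M" for x y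
      using that assms(2) unfolding class_capped_dist_def by (auto simp: min_def)
    fix x y z assume xyz: "x \<in> M" "y \<in> M" "z \<in> M"
    show "class_capped_dist M cls c d x y
      \<le> max (class_capped_dist M cls c d x z) (class_capped_dist M cls c d z y)"
    proof (cases "cls x = cls z \<and> cls z = cls y")
      case True
      have "min (d x y) c \<le> max (min (d x z) c) (min (d z y) c)"
        using ultrametric_onD[OF assms(1) xyz] by linarith
      with True xyz show ?thesis unfolding class_capped_dist_def by simp
    next
      case False
      with xyz have "c \<le> max (class_capped_dist M cls c d x z) (class_capped_dist M cls c d z y)"
        unfolding class_capped_dist_def by auto
      with class_capped_dist_le[of c] assms(2) show ?thesis by (meson less_imp_le order_trans)
    qed
  qed
qed

lemma mtopology_class_capped_dist:
  assumes "ultrametric_on M d" "0 < c"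
    and "\<And>x. x \<in> M \<Longrightarrow> \<exists>\<delta>>0. \<forall>y\<in>M. d x y < \<delta> \<longrightarrow> cls y = cls x"
  shows "Metric_space.mtopology M (class_capped_dist M cls c d) = Metric_space.mtopology M d"
proof -
  have ms: "Metric_space M d" using assms(1) by (rule ultrametric_on_Metric_space)
  have ms': "Metric_space M (class_capped_dist M cls c d)"
    using ultrametric_on_class_capped_dist[OF assms(1,2)] by (rule ultrametric_on_Metric_space)
  show ?thesis
    unfolding mtopology_eq_iff_locally_controlled[OF ms' ms]
  proof (intro conjI ballI allI impI)
    fix x and \<epsilon> :: real assume x: "x \<in> M" and "0 < \<epsilon>"
    obtain \<delta> where "0 < \<delta>" and \<delta>: "\<And>y. y \<in> M \<Longrightarrow> d x y < \<delta> \<Longrightarrow> cls y = cls x"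
      using assms(3)[OF x] by blast
    have "class_capped_dist M cls c d x y < \<epsilon>" if "y \<in> M" "d x y < min \<delta> \<epsilon>" for y
      using x that \<delta>[of y] unfolding class_capped_dist_def by auto
    then show "\<exists>\<delta>>0. \<forall>y\<in>M. d x y < \<delta> \<longrightarrow> class_capped_dist M cls c d x y < \<epsilon>"
      using \<open>0 < \<delta>\<close> \<open>0 < \<epsilon>\<close> by (intro exI[of _ "min \<delta> \<epsilon>"]) auto
    have "d x y < \<epsilon>" if "y \<in> M" "class_capped_dist M cls c d x y < min c \<epsilon>" for y
      using x that unfolding class_capped_dist_def by (auto split: if_splits)
    then show "\<exists>\<delta>>0. \<forall>y\<in>M. class_capped_dist M cls c d x y < \<delta> \<longrightarrow> d x y < \<epsilon>"
      using assms(2) \<open>0 < \<epsilon>\<close> by (intro exI[of _ "min c \<epsilon>"]) auto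
  qed
qed

section \<open>Non-compact spaces\<close>

lemma (in Metric_space) noncompact_obtains_discrete_sequence:
  assumes "\<not> compact_space mtopology"
  obtains x :: "nat \<Rightarrow> 'a" where "inj x" "range x \<subseteq> M"
    "\<And>z. z \<in> M \<Longrightarrow> \<exists>\<rho>>0. \<forall>n. x n \<in> mball z \<rho> \<longrightarrow> x n = z"
proof -
  obtain T where T: "T \<subseteq> M" "infinite T" "mtopology derived_set_of T = {}"
    using assms unfolding compact_space_eq_Bolzano_Weierstrass by blast
  obtain x :: "nat \<Rightarrow> 'a" where x: "inj x" "range x \<subseteq> T"
    using infinite_countable_subset[OF T(2)] by blast
  have no_limit: "mtopology derived_set_of (range x) = {}"
    using derived_set_of_mono[OF x(2)] T(3) by blast
  have "\<exists>\<rho>>0. \<forall>n. x n \<in> mball z \<rho> \<longrightarrow> x n = z" if z: "z \<in> M" for z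
  proof -
    have "z \<notin> mtopology derived_set_of (range x)" using no_limit by blast
    then obtain U where "z \<in> U" "openin mtopology U" and U: "\<And>y. y \<in> range x \<Longrightarrow> y \<in> U \<Longrightarrow> y = z"
      unfolding in_derived_set_of topspace_mtopology using z by auto
    then obtain \<rho> where "0 < \<rho>" "mball z \<rho> \<subseteq> U" using openin_mtopology by blast
    with U show ?thesis by blast
  qed
  with x T(1) show thesis using that by blast
qed

text \<open>The isolating balls are pairwise disjoint by the ultrametric inequality.\<close>

lemma ultrametric_isolating_balls_locally_constant:
  assumes "ultrametric_on M d" "range x \<subseteq> M" "\<And>n. 0 < r n"
    and isolating: "\<And>n m. x m \<in> Metric_space.mball M d (x n) (r n) \<Longrightarrow> m = n"
    and discrete: "\<And>z. z \<in> M \<Longrightarrow> \<exists>\<rho>>0. \<forall>n. x n \<in> Metric_space.mball M d z \<rho> \<longrightarrow> x n = z"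
    and "z \<in> M"
  shows "\<exists>\<delta>>0. \<forall>y\<in>M. d z y < \<delta> \<longrightarrow>
    {n. y \<in> Metric_space.mball M d (x n) (r n)} = {n. z \<in> Metric_space.mball M d (x n) (r n)}"
proof -
  interpret Metric_space M d using assms(1) by (rule ultrametric_on_Metric_space)
  define B where "B n = mball (x n) (r n)" for n
  have centre: "x n \<in> B n" for n
    using assms(2) assms(3)[of n] unfolding B_def by (simp add: range_subsetD)
  have nested: "B n \<subseteq> B m \<or> B m \<subseteq> B n" if "w \<in> B n" "w \<in> B m" for w n m
  proof (cases "r n \<le> r m")
    case True
    with that show ?thesis unfolding B_def using ultrametric_mball_subset[OF assms(1)] by blast
  next
    case False
    then have "r m \<le> r n" by simp
    with that show ?thesis unfolding B_def using ultrametric_mball_subset[OF assms(1)] by blast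
  qed
  have disjoint: "B n \<inter> B m = {}" if "n \<noteq> m" for n m
  proof (rule ccontr)
    assume "B n \<inter> B m \<noteq> {}"
    then obtain w where "w \<in> B n" "w \<in> B m" by blast
    then have "B n \<subseteq> B m \<or> B m \<subseteq> B n" by (rule nested)
    then have "x n \<in> B m \<or> x m \<in> B n" using centre by blast
    with that show False using isolating unfolding B_def by blast
  qed
  have "\<exists>\<delta>>0. \<forall>y\<in>M. d z y < \<delta> \<longrightarrow> (\<forall>m. y \<in> B m \<longleftrightarrow> z \<in> B m)"
  proof (cases "\<exists>n. z \<in> B n")
    case True
    then obtain n where "z \<in> B n" by blast
    moreover have "openin mtopology (B n)" unfolding B_def by simp
    ultimately obtain \<delta> where "0 < \<delta>" "mball z \<delta> \<subseteq> B n" using openin_mtopology by metis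
    then have "y \<in> B n" if "y \<in> M" "d z y < \<delta>" for y using that \<open>z \<in> M\<close> by auto
    then have "y \<in> B m \<longleftrightarrow> z \<in> B m" if "y \<in> M" "d z y < \<delta>" for y m
      using that \<open>z \<in> B n\<close> disjoint[of n m] by (cases "m = n") auto
    with \<open>0 < \<delta>\<close> show ?thesis by blast
  next
    case False
    obtain \<rho> where "0 < \<rho>" and \<rho>: "\<And>n. x n \<in> mball z \<rho> \<Longrightarrow> x n = z" using discrete[OF \<open>z \<in> M\<close>] by blast
    have "y \<notin> B n" if "y \<in> M" "d z y < \<rho>" for y n
    proof
      assume "y \<in> B n"
      moreover have "y \<in> mball z \<rho>" using that \<open>z \<in> M\<close> by simp
      ultimately have "mball z \<rho> \<subseteq> B n \<or> B n \<subseteq> mball z \<rho>"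
        unfolding B_def using ultrametric_mball_subset[OF assms(1)] by (meson linear)
      moreover have "z \<in> mball z \<rho>" using \<open>z \<in> M\<close> \<open>0 < \<rho>\<close> by simp
      ultimately have "z \<in> B n \<or> x n = z" using centre \<rho> by blast
      with False centre show False by blast
    qed
    with False \<open>0 < \<rho>\<close> show ?thesis by blast
  qed
  then show ?thesis unfolding B_def by (simp add: set_eq_iff)
qed

lemma not_doubling_on_equidistant:
  fixes x :: "nat \<Rightarrow> 'a"
  assumes "Metric_space M d" "inj x" "range x \<subseteq> M" "0 < c"
    and "\<And>n m. n \<noteq> m \<Longrightarrow> d (x n) (x m) = c"
  shows "\<not> doubling_on M d"
proof
  assume "doubling_on M d"
  then obtain \<beta> C where "doubling_bound M d C \<beta>" unfolding doubling_on_iff_bound by blast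
  define A where "A = x ` {..<nat \<lceil>C\<rceil> + 2}"
  have card_A: "card A = nat \<lceil>C\<rceil> + 2"
    unfolding A_def using assms(2) by (simp add: card_image inj_on_subset)
  have A: "A \<subseteq> M" "finite A" "2 \<le> card A" using assms(3) card_A unfolding A_def by auto
  have "d a b = (if a = b then 0 else c)" if ab: "a \<in> A" "b \<in> A" for a b
  proof -
    obtain i j where "a = x i" "b = x j" using ab unfolding A_def by blast
    then show ?thesis
      using assms(3) assms(5)[of i j] Metric_space.mdist_zero[OF assms(1)]
      by (cases "i = j") (auto simp: range_subsetD)
  qed
  then have "aspect_ratio d A = 1" using A(2,3) assms(4) by (rule aspect_ratio_equidistant[rotated 3])
  then have "real (card A) \<le> C"
    using \<open>doubling_bound M d C \<beta>\<close> A unfolding doubling_bound_def by (metis mult.right_neutral powr_one_eq_one)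
  with card_A show False by linarith
qed

lemma openin_ud_topology_equidistant:
  assumes "range x \<subseteq> topspace X" "0 < c"
  shows "openin (ud_topology X S) {d \<in> Ult X S. \<forall>n m. n \<noteq> m \<longrightarrow> d (x n) (x m) = c}"
proof (rule openin_ud_topology_if_large_distances_determine)
  fix d assume "d \<in> {d \<in> Ult X S. \<forall>n m. n \<noteq> m \<longrightarrow> d (x n) (x m) = c}"
  then have "\<forall>e\<in>Ult X S. (\<forall>x\<in>topspace X. \<forall>y\<in>topspace X. c \<le> d x y \<longrightarrow> e x y = d x y)
      \<longrightarrow> e \<in> {d \<in> Ult X S. \<forall>n m. n \<noteq> m \<longrightarrow> d (x n) (x m) = c}"
    using assms(1) by (auto simp: range_subsetD)
  with assms(2) show "\<exists>r>0. \<forall>e\<in>Ult X S. (\<forall>x\<in>topspace X. \<forall>y\<in>topspace X. r \<le> d x y \<longrightarrow> e x y = d x y)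
      \<longrightarrow> e \<in> {d \<in> Ult X S. \<forall>n m. n \<noteq> m \<longrightarrow> d (x n) (x m) = c}" by blast
qed blast

text \<open>On a non-compact space, keep \<open>d0\<close> inside disjoint isolating balls around a discrete
  sequence, make all other distances equal, and round down into \<open>S\<close>: the sequence becomes
  equidistant.\<close>

lemma noncompact_ex_equidistant_Ult:
  fixes X :: "'a topology"
  assumes "range_set S" "countable_coinitiality S" "ultrametrizable_space X" "\<not> compact_space X"
  shows "\<exists>e\<in>Ult X S. \<exists>(x :: nat \<Rightarrow> 'a) c. inj x \<and> range x \<subseteq> topspace X \<and> 0 < c
    \<and> (\<forall>n m. n \<noteq> m \<longrightarrow> e (x n) (x m) = c)"
proof -
  define M where "M = topspace X"
  obtain \<sigma> where \<sigma>: "decreasing_to_zero \<sigma>" and \<sigma>S: "\<And>n. \<sigma> n \<in> S"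
    using countable_coinitiality_obtains[OF assms(2)] by metis
  obtain d0 where u0: "ultrametric_on M d0" and top0: "Metric_space.mtopology M d0 = X"
    using assms(3) unfolding ultrametrizable_space_def M_def by blast
  interpret m0: Metric_space M d0 using u0 by (rule ultrametric_on_Metric_space)
  have "\<not> compact_space m0.mtopology" using assms(4) top0 by simp
  then obtain x :: "nat \<Rightarrow> 'a" where x: "inj x" "range x \<subseteq> M"
    and discrete: "\<And>z. z \<in> M \<Longrightarrow> \<exists>\<rho>>0. \<forall>n. x n \<in> m0.mball z \<rho> \<longrightarrow> x n = z"
    using m0.noncompact_obtains_discrete_sequence by blast
  have "\<exists>\<rho>>0. \<forall>m. x m \<in> m0.mball (x n) \<rho> \<longrightarrow> m = n" for n
    using discrete[of "x n"] x by (auto simp: inj_eq range_subsetD)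
  then obtain r where r: "\<And>n. 0 < r n" and isolating: "\<And>n m. x m \<in> m0.mball (x n) (r n) \<Longrightarrow> m = n"
    by metis
  define cls where "cls z = {n. z \<in> m0.mball (x n) (r n)}" for z
  define d1 where "d1 = class_capped_dist M cls (2 * \<sigma> 0) d0"
  define e where "e = (\<lambda>y z. round_down \<sigma> (d1 y z))"
  have "0 < \<sigma> 0" using \<sigma> by (rule decreasing_to_zero_pos)
  have u1: "ultrametric_on M d1"
    unfolding d1_def using u0 \<open>0 < \<sigma> 0\<close> by (intro ultrametric_on_class_capped_dist) simp_all
  have top1: "Metric_space.mtopology M d1 = X"
    unfolding d1_def cls_def top0[symmetric] using u0 \<open>0 < \<sigma> 0\<close>
    by (intro mtopology_class_capped_dist ultrametric_isolating_balls_locally_constant[OF u0 x(2) r]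
          isolating discrete) auto
  have ue: "ultrametric_on M e"
    unfolding e_def
    by (rule ultrametric_on_comp[OF u1 round_down_mono[OF \<sigma>] round_down_zero[OF \<sigma> order_refl]
          round_down_pos[OF \<sigma>]])
  have "Metric_space.mtopology M e = Metric_space.mtopology M d1"
    unfolding e_def
  proof (rule mtopology_comp)
    show "\<exists>\<delta>>0. \<forall>t\<ge>0. round_down \<sigma> t < \<delta> \<longrightarrow> t < \<epsilon>" if \<epsilon>: "0 < \<epsilon>" for \<epsilon>
    proof -
      obtain n where "\<sigma> n < \<epsilon>" using decreasing_to_zero_ex_less[OF \<sigma> \<epsilon>] by blast
      then show ?thesis
        using decreasing_to_zero_pos[OF \<sigma>] round_down_less_imp_le[OF \<sigma>] by (meson le_less_trans)
    qed
  qed (use u1 ue ultrametric_on_Metric_space round_down_le[OF \<sigma>] in \<open>simp_all add: e_def[symmetric]\<close>)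
  with top1 have tope: "Metric_space.mtopology M e = X" by simp
  have "e \<in> Ult X S"
    unfolding Ult_def
  proof (intro CollectI conjI ballI allI impI)
    show "e y z \<in> S" for y z
      using round_down_in[OF \<sigma>, of "d1 y z"] \<sigma>S assms(1) unfolding e_def range_set_def by auto
    show "e y z = 0" if "y \<notin> topspace X \<or> z \<notin> topspace X" for y z
      using that unfolding e_def d1_def class_capped_dist_def M_def by (auto simp: round_down_zero[OF \<sigma>])
  qed (use ue tope in \<open>simp_all add: M_def\<close>)
  moreover have "e (x n) (x m) = \<sigma> 0" if "n \<noteq> m" for n m
  proof -
    have "n \<in> cls (x n)" unfolding cls_def using r[of n] x(2) by (simp add: range_subsetD)
    moreover have "n \<notin> cls (x m)"
    proof
      assume "n \<in> cls (x m)"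
      then have "x m \<in> m0.mball (x n) (r n)" unfolding cls_def by simp
      then have "m = n" by (rule isolating)
      with that show False by simp
    qed
    ultimately have "cls (x n) \<noteq> cls (x m)" by metis
    then have "d1 (x n) (x m) = 2 * \<sigma> 0"
      unfolding d1_def class_capped_dist_def using x(2) by (auto simp: range_subsetD)
    then show ?thesis
      unfolding e_def using \<open>0 < \<sigma> 0\<close> by (simp add: round_down_above_first[OF \<sigma>])
  qed
  ultimately have "e \<in> Ult X S \<and> inj x \<and> range x \<subseteq> topspace X \<and> 0 < \<sigma> 0
      \<and> (\<forall>n m. n \<noteq> m \<longrightarrow> e (x n) (x m) = \<sigma> 0)"
    using x \<open>0 < \<sigma> 0\<close> unfolding M_def by simp
  then show ?thesis by (intro bexI[of _ e] exI[of _ x] exI[of _ "\<sigma> 0"]) auto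
qed

lemma noncompact_imp_doubling_not_dense:
  fixes X :: "'a topology"
  assumes "range_set S" "countable_coinitiality S" "ultrametrizable_space X" "\<not> compact_space X"
  shows "ud_topology X S closure_of {d \<in> Ult X S. doubling_on (topspace X) d}
    \<noteq> topspace (ud_topology X S)"
proof -
  obtain e and x :: "nat \<Rightarrow> 'a" and c where e: "e \<in> Ult X S" and x: "inj x" "range x \<subseteq> topspace X"
    and "0 < c" and equidistant: "\<forall>n m. n \<noteq> m \<longrightarrow> e (x n) (x m) = c"
    using noncompact_ex_equidistant_Ult[OF assms] by blast
  let ?U = "{d \<in> Ult X S. \<forall>n m. n \<noteq> m \<longrightarrow> d (x n) (x m) = c}"
  have "openin (ud_topology X S) ?U" using x(2) \<open>0 < c\<close> by (rule openin_ud_topology_equidistant)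
  moreover have "e \<in> ?U" using e equidistant by blast
  moreover have "\<not> doubling_on (topspace X) d" if d: "d \<in> ?U" for d
  proof (rule not_doubling_on_equidistant[where x = x and c = c])
    show "Metric_space (topspace X) d" using d Ult_Metric_space by blast
    show "d (x n) (x m) = c" if "n \<noteq> m" for n m using d that by blast
  qed (use x \<open>0 < c\<close> in simp_all)
  ultimately have "e \<notin> ud_topology X S closure_of {d \<in> Ult X S. doubling_on (topspace X) d}"
    unfolding in_closure_of by (metis (mono_tags, lifting) mem_Collect_eq)
  with e show ?thesis unfolding topspace_ud_topology by blast
qed

section \<open>First-difference metrics\<close>

lemma decreasing_to_zero_halving_subseq:
  assumes "decreasing_to_zero \<sigma>" "0 < r"
  obtains \<tau> :: "nat \<Rightarrow> real" where "decreasing_to_zero \<tau>" "range \<tau> \<subseteq> range \<sigma>" "\<tau> 0 < r"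
    "\<And>k. \<tau> (Suc k) \<le> \<tau> k / 2"
proof -
  have below: "\<exists>n. \<sigma> n < t" if "0 < t" for t using decreasing_to_zero_ex_less[OF assms(1) that] .
  define g where "g = rec_nat (LEAST n. \<sigma> n < r) (\<lambda>_ m. LEAST n. \<sigma> n \<le> \<sigma> m / 2)"
  have g0: "\<sigma> (g 0) < r" unfolding g_def using below[OF assms(2)] by (simp add: LeastI_ex[where P = "\<lambda>n. \<sigma> n < r"])
  have gSuc: "\<sigma> (g (Suc k)) \<le> \<sigma> (g k) / 2" for k
  proof -
    have "\<exists>n. \<sigma> n \<le> \<sigma> (g k) / 2"
      using below[of "\<sigma> (g k) / 2"] decreasing_to_zero_pos[OF assms(1)] by (meson half_gt_zero less_imp_le)
    moreover have "g (Suc k) = (LEAST n. \<sigma> n \<le> \<sigma> (g k) / 2)" by (simp add: g_def)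
    ultimately show ?thesis by (metis (mono_tags, lifting) LeastI_ex)
  qed
  have "g k < g (Suc k)" for k
    using gSuc[of k] decreasing_to_zero_pos[OF assms(1), of "g k"] decreasing_to_zero_le[OF assms(1), of "g (Suc k)" "g k"]
    by linarith
  then have "strict_mono g" by (rule strict_monoI_Suc)
  have "decreasing_to_zero (\<sigma> \<circ> g)"
    unfolding decreasing_to_zero_def
  proof
    show "\<forall>k. (\<sigma> \<circ> g) (Suc k) < (\<sigma> \<circ> g) k"
    proof
      fix k
      have "\<sigma> (g (Suc k)) \<le> \<sigma> (g k) / 2" by (rule gSuc)
      also have "\<dots> < \<sigma> (g k)" using decreasing_to_zero_pos[OF assms(1)] by simp
      finally show "(\<sigma> \<circ> g) (Suc k) < (\<sigma> \<circ> g) k" by simp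
    qed
    show "(\<sigma> \<circ> g) \<longlonglongrightarrow> 0"
      using assms(1) \<open>strict_mono g\<close> unfolding decreasing_to_zero_def by (simp add: LIMSEQ_subseq_LIMSEQ)
  qed
  moreover have "range (\<sigma> \<circ> g) \<subseteq> range \<sigma>" by auto
  ultimately show thesis using g0 gSuc by (intro that[of "\<sigma> \<circ> g"]) simp_all
qed

lemma halving_pow_le:
  assumes "\<And>k. \<tau> (Suc k) \<le> \<tau> k / (2::real)"
  shows "\<tau> (i + m) * 2 ^ m \<le> \<tau> i"
proof (induction m)
  case (Suc m)
  have "\<tau> (i + Suc m) * 2 ^ Suc m = (2 * \<tau> (Suc (i + m))) * 2 ^ m" by simp
  also have "\<dots> \<le> \<tau> (i + m) * 2 ^ m" using assms[of "i + m"] by (intro mult_right_mono) simp_all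
  also have "\<dots> \<le> \<tau> i" by (rule Suc.IH)
  finally show ?case .
qed simp

definition first_diff :: "(nat \<Rightarrow> 'a set) \<Rightarrow> 'a \<Rightarrow> 'a \<Rightarrow> nat" where
  "first_diff C x y = (LEAST k. (x \<in> C k) \<noteq> (y \<in> C k))"

definition code_dist :: "(nat \<Rightarrow> real) \<Rightarrow> (nat \<Rightarrow> 'a set) \<Rightarrow> 'a \<Rightarrow> 'a \<Rightarrow> real" where
  "code_dist \<tau> C x y = (if x = y then 0 else \<tau> (first_diff C x y))"

lemma first_diff_commute: "first_diff C x y = first_diff C y x"
  unfolding first_diff_def by (metis (full_types))

lemma first_diff_differs:
  "(x \<in> C k) \<noteq> (y \<in> C k) \<Longrightarrow> (x \<in> C (first_diff C x y)) \<noteq> (y \<in> C (first_diff C x y))"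
  unfolding first_diff_def by (rule LeastI)

lemma less_first_diff_agree: "k < first_diff C x y \<Longrightarrow> (x \<in> C k) = (y \<in> C k)"
  unfolding first_diff_def using not_less_Least by blast

lemma first_diff_min_le:
  assumes "(x \<in> C k) \<noteq> (y \<in> C k)"
  shows "min (first_diff C x z) (first_diff C z y) \<le> first_diff C x y"
proof (rule ccontr)
  assume "\<not> ?thesis"
  then have "(x \<in> C (first_diff C x y)) = (y \<in> C (first_diff C x y))"
    using less_first_diff_agree[of "first_diff C x y" C x z] less_first_diff_agree[of "first_diff C x y" C z y]
    by simp
  with first_diff_differs[of x C k y, OF assms] show False by blast
qed

context
  fixes \<tau> :: "nat \<Rightarrow> real" and C :: "nat \<Rightarrow> 'a set" and M :: "'a set"
  assumes \<tau>: "decreasing_to_zero \<tau>"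
    and separating: "\<And>x y. x \<in> M \<Longrightarrow> y \<in> M \<Longrightarrow> x \<noteq> y \<Longrightarrow> \<exists>k. (x \<in> C k) \<noteq> (y \<in> C k)"
begin

lemma ultrametric_on_code_dist: "ultrametric_on M (code_dist \<tau> C)"
proof (rule ultrametric_onI)
  show "0 \<le> code_dist \<tau> C x y" for x y
    unfolding code_dist_def using decreasing_to_zero_pos[OF \<tau>] by (simp add: less_imp_le)
  show "code_dist \<tau> C x y = code_dist \<tau> C y x" for x y
    unfolding code_dist_def by (simp add: first_diff_commute eq_commute)
  show "code_dist \<tau> C x y = 0 \<longleftrightarrow> x = y" for x y
    unfolding code_dist_def using decreasing_to_zero_pos[OF \<tau>] by (simp add: less_imp_neq[symmetric])
  fix x y z assume xyz: "x \<in> M" "y \<in> M" "z \<in> M"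
  show "code_dist \<tau> C x y \<le> max (code_dist \<tau> C x z) (code_dist \<tau> C z y)"
  proof (cases "x = y \<or> x = z \<or> z = y")
    case True
    then show ?thesis
      unfolding code_dist_def using decreasing_to_zero_pos[OF \<tau>]
      by (auto simp: le_max_iff_disj less_imp_le)
  next
    case False
    then obtain k where "(x \<in> C k) \<noteq> (y \<in> C k)" using separating xyz by blast
    then have "\<tau> (first_diff C x y) \<le> \<tau> (min (first_diff C x z) (first_diff C z y))"
      by (intro decreasing_to_zero_le[OF \<tau>] first_diff_min_le)
    also have "\<dots> \<le> max (\<tau> (first_diff C x z)) (\<tau> (first_diff C z y))"
      by (simp add: min_def)
    finally show ?thesis using False unfolding code_dist_def by simp
  qed
qed

end

lemma code_dist_le_first: "decreasing_to_zero \<tau> \<Longrightarrow> code_dist \<tau> C x y \<le> \<tau> 0"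
  unfolding code_dist_def
  using decreasing_to_zero_le[of \<tau> 0] decreasing_to_zero_pos[of \<tau> 0] by simp

lemma code_dist_in: "code_dist \<tau> C x y \<in> insert 0 (range \<tau>)"
  unfolding code_dist_def by simp

lemma card_le_pow_separating_window:
  assumes "finite A"
    and "\<And>x y. x \<in> A \<Longrightarrow> y \<in> A \<Longrightarrow> x \<noteq> y \<Longrightarrow> \<exists>k\<in>{i..j}. (x \<in> C k) \<noteq> (y \<in> C k)"
  shows "card A \<le> 2 ^ (Suc j - i)"
proof -
  have "inj_on (\<lambda>x. {k \<in> {i..j}. x \<in> C k}) A"
  proof (rule inj_onI, rule ccontr)
    fix x y assume "x \<in> A" "y \<in> A" "{k \<in> {i..j}. x \<in> C k} = {k \<in> {i..j}. y \<in> C k}" "x \<noteq> y"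
    with assms(2)[of x y] show False by blast
  qed
  then have "card A \<le> card (Pow {i..j})" by (rule card_inj_on_le) auto
  then show ?thesis by (simp add: card_Pow)
qed

lemma card_le_code_dist_aspect_ratio:
  assumes \<tau>: "decreasing_to_zero \<tau>" and halving: "\<And>k. \<tau> (Suc k) \<le> \<tau> k / 2"
    and A: "finite A" "2 \<le> card A"
    and separating: "\<And>x y. x \<in> A \<Longrightarrow> y \<in> A \<Longrightarrow> x \<noteq> y \<Longrightarrow> \<exists>k. (x \<in> C k) \<noteq> (y \<in> C k)"
  shows "real (card A) \<le> 2 * aspect_ratio (code_dist \<tau> C) A"
proof -
  let ?t = "code_dist \<tau> C"
  have ms: "Metric_space A ?t"
    using ultrametric_on_code_dist[OF \<tau> separating] by (rule ultrametric_on_Metric_space)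
  define FD where "FD = {first_diff C x y | x y. x \<in> A \<and> y \<in> A \<and> x \<noteq> y}"
  have "finite FD" unfolding FD_def using A(1) by (rule finite_pair_values)
  moreover obtain x0 y0 where "x0 \<in> A" "y0 \<in> A" "x0 \<noteq> y0" using A(2) by (rule two_le_card_obtains)
  then have "FD \<noteq> {}" unfolding FD_def by blast
  ultimately have "Min FD \<in> FD" "Max FD \<in> FD" by simp_all
  define i where "i = Min FD"
  define j where "j = Max FD"
  have "i \<in> FD" "j \<in> FD" unfolding i_def j_def by fact+
  obtain a b where ab: "a \<in> A" "b \<in> A" "a \<noteq> b" "first_diff C a b = i"
    using \<open>i \<in> FD\<close> unfolding FD_def by blast
  obtain a' b' where ab': "a' \<in> A" "b' \<in> A" "a' \<noteq> b'" "first_diff C a' b' = j"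
    using \<open>j \<in> FD\<close> unfolding FD_def by blast
  have window: "first_diff C x y \<in> {i..j}" if "x \<in> A" "y \<in> A" "x \<noteq> y" for x y
  proof -
    have "first_diff C x y \<in> FD" unfolding FD_def using that by blast
    with \<open>finite FD\<close> show ?thesis unfolding i_def j_def by simp
  qed
  have "i \<le> j" using window[OF ab(1-3)] by simp
  have "card A \<le> 2 ^ (Suc j - i)"
  proof (rule card_le_pow_separating_window[OF A(1)])
    fix x y assume "x \<in> A" "y \<in> A" "x \<noteq> y"
    moreover obtain k where "(x \<in> C k) \<noteq> (y \<in> C k)" using separating \<open>x \<in> A\<close> \<open>y \<in> A\<close> \<open>x \<noteq> y\<close> by blast
    then have "(x \<in> C (first_diff C x y)) \<noteq> (y \<in> C (first_diff C x y))" by (rule first_diff_differs)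
    ultimately show "\<exists>k\<in>{i..j}. (x \<in> C k) \<noteq> (y \<in> C k)" using window by blast
  qed
  then have "card A \<le> 2 * 2 ^ (j - i)" using \<open>i \<le> j\<close> by (simp add: Suc_diff_le)
  then have "real (card A) \<le> 2 * 2 ^ (j - i)" using of_nat_mono[where 'a = real] by fastforce
  also have "2 ^ (j - i) \<le> \<tau> i / \<tau> j"
    using halving_pow_le[of \<tau> i "j - i", OF halving] \<open>i \<le> j\<close> decreasing_to_zero_pos[OF \<tau>, of j]
    by (simp add: field_simps)
  also have "\<tau> i / \<tau> j \<le> aspect_ratio ?t A"
  proof -
    have "\<tau> i \<le> diam_d ?t A"
      using diam_d_ge[OF A(1) ab(1,2), of ?t] ab(3,4) unfolding code_dist_def by simp
    moreover have "sep_d ?t A \<le> \<tau> j"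
      using sep_d_le[OF A(1) ab'(1-3), of ?t] ab'(3,4) unfolding code_dist_def by simp
    moreover have "0 < sep_d ?t A" using ms A by (intro sep_d_pos) auto
    moreover have "0 < \<tau> i" by (rule decreasing_to_zero_pos[OF \<tau>])
    ultimately show ?thesis unfolding aspect_ratio_def by (intro frac_le) simp_all
  qed
  finally show ?thesis by simp
qed

lemma (in Metric_space) fine_family_separating:
  assumes fine: "\<And>x \<rho>. x \<in> M \<Longrightarrow> 0 < \<rho> \<Longrightarrow> \<exists>k. x \<in> C k \<and> C k \<subseteq> mball x \<rho>"
    and "x \<in> M" "y \<in> M" "x \<noteq> y"
  shows "\<exists>k. (x \<in> C k) \<noteq> (y \<in> C k)"
proof -
  obtain k where "x \<in> C k" "C k \<subseteq> mball x (d x y)"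
    using fine[OF assms(2)] mdist_pos_less[OF assms(4,2,3)] by blast
  then show ?thesis by auto
qed

lemma (in Metric_space) mtopology_code_dist:
  assumes \<tau>: "decreasing_to_zero \<tau>"
    and clopen: "\<And>k. openin mtopology (C k)" "\<And>k. closedin mtopology (C k)"
    and fine: "\<And>x \<rho>. x \<in> M \<Longrightarrow> 0 < \<rho> \<Longrightarrow> \<exists>k. x \<in> C k \<and> C k \<subseteq> mball x \<rho>"
  shows "Metric_space.mtopology M (code_dist \<tau> C) = mtopology"
proof -
  have mst: "Metric_space M (code_dist \<tau> C)"
    using ultrametric_on_code_dist[OF \<tau> fine_family_separating[OF fine]] by (rule ultrametric_on_Metric_space)
  show ?thesis
    unfolding mtopology_eq_iff_locally_controlled[OF mst Metric_space_axioms]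
  proof (intro conjI ballI allI impI)
    fix x and \<epsilon> :: real assume "x \<in> M" "0 < \<epsilon>"
    obtain K where "\<tau> K < \<epsilon>" using decreasing_to_zero_ex_less[OF \<tau> \<open>0 < \<epsilon>\<close>] by blast
    define V where "V = (\<Inter>k\<in>{..K}. if x \<in> C k then C k else M - C k)"
    have "openin mtopology V"
      unfolding V_def using clopen by (intro openin_INT2) (auto simp: closedin_def)
    moreover have "x \<in> V" unfolding V_def using \<open>x \<in> M\<close> by auto
    ultimately obtain \<delta> where "0 < \<delta>" "mball x \<delta> \<subseteq> V" using openin_mtopology by metis
    have "code_dist \<tau> C x y < \<epsilon>" if "y \<in> M" "d x y < \<delta>" for y
    proof (cases "x = y")
      case False
      have "y \<in> V" using \<open>mball x \<delta> \<subseteq> V\<close> \<open>x \<in> M\<close> that by auto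
      then have agree: "(x \<in> C k) = (y \<in> C k)" if "k \<le> K" for k
        using that unfolding V_def by (auto split: if_splits)
      obtain k0 where "(x \<in> C k0) \<noteq> (y \<in> C k0)"
        using fine_family_separating[OF fine \<open>x \<in> M\<close> \<open>y \<in> M\<close> False] by blast
      then have "(x \<in> C (first_diff C x y)) \<noteq> (y \<in> C (first_diff C x y))" by (rule first_diff_differs)
      then have "K < first_diff C x y" using agree[of "first_diff C x y"] by linarith
      then have "\<tau> (first_diff C x y) \<le> \<tau> K" by (simp add: decreasing_to_zero_le[OF \<tau>])
      with False \<open>\<tau> K < \<epsilon>\<close> show ?thesis unfolding code_dist_def by simp
    qed (simp add: code_dist_def \<open>0 < \<epsilon>\<close>)
    with \<open>0 < \<delta>\<close> show "\<exists>\<delta>>0. \<forall>y\<in>M. d x y < \<delta> \<longrightarrow> code_dist \<tau> C x y < \<epsilon>" by blast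
    obtain k where k: "x \<in> C k" "C k \<subseteq> mball x \<epsilon>" using fine[OF \<open>x \<in> M\<close> \<open>0 < \<epsilon>\<close>] by blast
    have "d x y < \<epsilon>" if "y \<in> M" "code_dist \<tau> C x y < \<tau> k" for y
    proof (cases "x = y")
      case False
      with that have "\<tau> (first_diff C x y) < \<tau> k" unfolding code_dist_def by simp
      then have "k < first_diff C x y" using decreasing_to_zero_le[OF \<tau>, of "first_diff C x y" k] by linarith
      then have "y \<in> C k" using less_first_diff_agree[of k C x y] k(1) by simp
      with k(2) show ?thesis by auto
    qed (use \<open>x \<in> M\<close> \<open>0 < \<epsilon>\<close> in simp)
    then show "\<exists>\<delta>>0. \<forall>y\<in>M. code_dist \<tau> C x y < \<delta> \<longrightarrow> d x y < \<epsilon>"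
      using decreasing_to_zero_pos[OF \<tau>] by blast
  qed
qed

section \<open>Compact spaces\<close>

definition splice_dist :: "'a set \<Rightarrow> real \<Rightarrow> ('a \<Rightarrow> 'a \<Rightarrow> real) \<Rightarrow> ('a \<Rightarrow> 'a \<Rightarrow> real) \<Rightarrow> 'a \<Rightarrow> 'a \<Rightarrow> real" where
  "splice_dist M s e t x y = (if x \<in> M \<and> y \<in> M then if s < e x y then e x y else t x y else 0)"

context
  fixes M :: "'a set" and s :: real and e t :: "'a \<Rightarrow> 'a \<Rightarrow> real"
  assumes e: "ultrametric_on M e" and t: "ultrametric_on M t" and t_le: "\<And>x y. t x y \<le> s"
begin

lemma ultrametric_on_splice_dist: "ultrametric_on M (splice_dist M s e t)"
proof -
  interpret E: Metric_space M e using e by (rule ultrametric_on_Metric_space)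
  interpret T: Metric_space M t using t by (rule ultrametric_on_Metric_space)
  show ?thesis
  proof (rule ultrametric_onI)
    show "0 \<le> splice_dist M s e t x y" for x y unfolding splice_dist_def by simp
    show "splice_dist M s e t x y = splice_dist M s e t y x" for x y
      unfolding splice_dist_def by (simp add: E.commute T.commute conj_commute)
    show "splice_dist M s e t x y = 0 \<longleftrightarrow> x = y" if "x \<in> M" "y \<in> M" for x y
      using that E.nonneg[of x y] unfolding splice_dist_def by auto
    fix x y z assume xyz: "x \<in> M" "y \<in> M" "z \<in> M"
    have e_ultra: "e x y \<le> max (e x z) (e z y)" using ultrametric_onD[OF e xyz] .
    have t_ultra: "t x y \<le> max (t x z) (t z y)" using ultrametric_onD[OF t xyz] .
    show "splice_dist M s e t x y \<le> max (splice_dist M s e t x z) (splice_dist M s e t z y)"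
      using xyz e_ultra t_ultra t_le[of x y] t_le[of x z] t_le[of z y] unfolding splice_dist_def
      by (auto simp: max_def split: if_splits)
  qed
qed

lemma mtopology_splice_dist:
  assumes "0 < s" "Metric_space.mtopology M t = Metric_space.mtopology M e"
  shows "Metric_space.mtopology M (splice_dist M s e t) = Metric_space.mtopology M e"
proof -
  have ms: "Metric_space M (splice_dist M s e t)"
    using ultrametric_on_splice_dist by (rule ultrametric_on_Metric_space)
  have me: "Metric_space M e" and mt: "Metric_space M t"
    using e t by (simp_all add: ultrametric_on_Metric_space)
  have t_ctrl: "\<exists>\<delta>>0. \<forall>y\<in>M. e x y < \<delta> \<longrightarrow> t x y < \<epsilon>"
    and e_ctrl: "\<exists>\<delta>>0. \<forall>y\<in>M. t x y < \<delta> \<longrightarrow> e x y < \<epsilon>" if "x \<in> M" "0 < \<epsilon>" for x \<epsilon>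
    using assms(2) that unfolding mtopology_eq_iff_locally_controlled[OF mt me] by blast+
  show ?thesis
    unfolding mtopology_eq_iff_locally_controlled[OF ms me]
  proof (intro conjI ballI allI impI)
    fix x and \<epsilon> :: real assume "x \<in> M" "0 < \<epsilon>"
    obtain \<delta> where "0 < \<delta>" and \<delta>: "\<And>y. y \<in> M \<Longrightarrow> e x y < \<delta> \<Longrightarrow> t x y < \<epsilon>"
      using t_ctrl[OF \<open>x \<in> M\<close> \<open>0 < \<epsilon>\<close>] by blast
    have "splice_dist M s e t x y < \<epsilon>" if "y \<in> M" "e x y < min \<delta> s" for y
      using that \<delta>[of y] \<open>x \<in> M\<close> unfolding splice_dist_def by simp
    with \<open>0 < \<delta>\<close> \<open>0 < s\<close> show "\<exists>\<delta>>0. \<forall>y\<in>M. e x y < \<delta> \<longrightarrow> splice_dist M s e t x y < \<epsilon>"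
      by (intro exI[of _ "min \<delta> s"]) auto
    obtain \<delta>' where "0 < \<delta>'" and \<delta>': "\<And>y. y \<in> M \<Longrightarrow> t x y < \<delta>' \<Longrightarrow> e x y < \<epsilon>"
      using e_ctrl[OF \<open>x \<in> M\<close> \<open>0 < \<epsilon>\<close>] by blast
    have "e x y < \<epsilon>" if "y \<in> M" "splice_dist M s e t x y < min \<delta>' s" for y
      using that \<delta>'[of y] \<open>x \<in> M\<close> unfolding splice_dist_def by (auto split: if_splits)
    with \<open>0 < \<delta>'\<close> \<open>0 < s\<close> show "\<exists>\<delta>>0. \<forall>y\<in>M. splice_dist M s e t x y < \<delta> \<longrightarrow> e x y < \<epsilon>"
      by (intro exI[of _ "min \<delta>' s"]) auto
  qed
qed

end

lemma UD_splice_dist_le: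
  assumes "s \<in> S" "\<And>x y. t x y \<le> s" "\<And>x y. 0 \<le> e x y"
  shows "UD X S e (splice_dist (topspace X) s e t) \<le> ereal s"
  using assms by (intro UD_le_ereal) (auto simp: splice_dist_def)

lemma compact_ultrametric_obtains_clopen_balls:
  assumes "ultrametric_on M e" "compact_space (Metric_space.mtopology M e)"
  obtains C :: "nat \<Rightarrow> 'a set" where
    "\<And>k. openin (Metric_space.mtopology M e) (C k)" "\<And>k. closedin (Metric_space.mtopology M e) (C k)"
    "\<And>x \<rho>. x \<in> M \<Longrightarrow> 0 < \<rho> \<Longrightarrow> \<exists>k. x \<in> C k \<and> C k \<subseteq> Metric_space.mball M e x \<rho>"
proof -
  interpret Metric_space M e using assms(1) by (rule ultrametric_on_Metric_space)
  have "mtotally_bounded M" using assms(2) compact_space_eq_mcomplete_mtotally_bounded by blast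
  have finite_level: "finite ((\<lambda>z. mball z r) ` M)" if "0 < r" for r
  proof -
    have "\<exists>K. finite K \<and> K \<subseteq> M \<and> M \<subseteq> (\<Union>x\<in>K. mball x r)"
      using \<open>mtotally_bounded M\<close> \<open>0 < r\<close> unfolding mtotally_bounded_def by simp
    then obtain K where K: "finite K" "K \<subseteq> M" "M \<subseteq> (\<Union>x\<in>K. mball x r)" by (elim exE conjE)
    have "(\<lambda>z. mball z r) ` M \<subseteq> (\<lambda>k. mball k r) ` K"
    proof
      fix B assume "B \<in> (\<lambda>z. mball z r) ` M"
      then obtain z where "z \<in> M" "B = mball z r" by blast
      moreover obtain k where "k \<in> K" "z \<in> mball k r" using K(3) \<open>z \<in> M\<close> by blast
      moreover have "mball z r = mball k r" using assms(1) \<open>z \<in> mball k r\<close> by (rule ultrametric_mball_eq)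
      ultimately show "B \<in> (\<lambda>k. mball k r) ` K" by simp
    qed
    moreover have "finite ((\<lambda>k. mball k r) ` K)" using K(1) by simp
    ultimately show ?thesis by (rule finite_subset)
  qed
  define B where "B = (\<Union>n. (\<lambda>z. mball z (1 / Suc n)) ` M)"
  have "countable (insert {} B)" unfolding B_def using finite_level by (simp add: countable_finite)
  define C where "C = from_nat_into (insert {} B)"
  have C: "C k = {} \<or> (\<exists>z r. C k = mball z r)" for k
    using from_nat_into[of "insert {} B" k] unfolding C_def B_def by blast
  show thesis
  proof
    show "openin mtopology (C k)" for k using C[of k] by auto
    show "closedin mtopology (C k)" for k
      using C[of k] ultrametric_closedin_mball[OF assms(1)] by (metis closedin_empty)
    fix x and \<rho> :: real assume "x \<in> M" "0 < \<rho>"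
    obtain n where "1 / Suc n < \<rho>" using \<open>0 < \<rho>\<close> by (metis reals_Archimedean inverse_eq_divide)
    have "mball x (1 / Suc n) \<in> insert {} B" unfolding B_def using \<open>x \<in> M\<close> by blast
    then obtain k where "C k = mball x (1 / Suc n)"
      using from_nat_into_surj[OF \<open>countable (insert {} B)\<close>] unfolding C_def by metis
    then show "\<exists>k. x \<in> C k \<and> C k \<subseteq> mball x \<rho>"
      using \<open>x \<in> M\<close> \<open>1 / Suc n < \<rho>\<close> by (intro exI[of _ k]) auto
  qed
qed

lemma doubling_on_if_finite_cover:
  assumes "Metric_space M d" "finite K" "M \<subseteq> (\<Union>k\<in>K. P k)" "1 \<le> C"
    and piece: "\<And>k B. k \<in> K \<Longrightarrow> B \<subseteq> M \<inter> P k \<Longrightarrow> finite B \<Longrightarrow> 2 \<le> card B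
      \<Longrightarrow> real (card B) \<le> C * aspect_ratio d B"
  shows "doubling_on M d"
proof -
  have "doubling_bound M d (real (card K) * C + 1) 1"
    unfolding doubling_bound_def
  proof (intro allI impI)
    fix A assume A: "A \<subseteq> M" "finite A" "2 \<le> card A"
    have "1 \<le> aspect_ratio d A" using aspect_ratio_ge_1[OF assms(1) A] .
    have bound: "real (card (A \<inter> P k)) \<le> C * aspect_ratio d A" if "k \<in> K" for k
    proof (cases "2 \<le> card (A \<inter> P k)")
      case True
      have "real (card (A \<inter> P k)) \<le> C * aspect_ratio d (A \<inter> P k)"
        using A(1,2) by (intro piece[OF that _ _ True]) auto
      also have "\<dots> \<le> C * aspect_ratio d A"
        using aspect_ratio_mono[OF assms(1) A(1,2) _ True] assms(4) by simp
      finally show ?thesis .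
    next
      case False
      then have "real (card (A \<inter> P k)) \<le> 1" by simp
      also have "\<dots> \<le> C * aspect_ratio d A"
        using assms(4) \<open>1 \<le> aspect_ratio d A\<close> by (metis mult_mono' mult.right_neutral order_trans zero_le_one)
      finally show ?thesis .
    qed
    have "A = (\<Union>k\<in>K. A \<inter> P k)" using A(1) assms(3) by blast
    then have "card A \<le> (\<Sum>k\<in>K. card (A \<inter> P k))" by (metis card_UN_le[OF assms(2)])
    then have "real (card A) \<le> (\<Sum>k\<in>K. real (card (A \<inter> P k)))" by (metis of_nat_mono of_nat_sum)
    also have "\<dots> \<le> real (card K) * (C * aspect_ratio d A)"
      using sum_bounded_above[of K "\<lambda>k. real (card (A \<inter> P k))"] bound by simp
    also have "\<dots> \<le> (real (card K) * C + 1) * aspect_ratio d A powr 1"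
      using \<open>1 \<le> aspect_ratio d A\<close> by (simp add: algebra_simps)
    finally show "real (card A) \<le> (real (card K) * C + 1) * aspect_ratio d A powr 1" .
  qed
  moreover have "1 \<le> real (card K) * C + 1" using assms(4) by simp
  ultimately show ?thesis unfolding doubling_on_iff_bound by (meson zero_less_one)
qed

lemma compact_imp_doubling_approximation:
  fixes X :: "'a topology"
  assumes "range_set S" "countable_coinitiality S" "compact_space X" "e \<in> Ult X S" "0 < r"
  shows "\<exists>d\<in>Ult X S. doubling_on (topspace X) d \<and> UD X S e d < ereal r"
proof -
  define M where "M = topspace X"
  obtain \<sigma> where \<sigma>: "decreasing_to_zero \<sigma>" and \<sigma>S: "\<And>n. \<sigma> n \<in> S"
    using countable_coinitiality_obtains[OF assms(2)] by metis
  obtain \<tau> :: "nat \<Rightarrow> real" where \<tau>: "decreasing_to_zero \<tau>" and "range \<tau> \<subseteq> range \<sigma>" "\<tau> 0 < r"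
    and halving: "\<And>k. \<tau> (Suc k) \<le> \<tau> k / 2"
    using decreasing_to_zero_halving_subseq[OF \<sigma> assms(5)] by metis
  define s where "s = \<tau> 0"
  have "0 < s" unfolding s_def by (rule decreasing_to_zero_pos[OF \<tau>])
  have "range \<tau> \<subseteq> S" using \<open>range \<tau> \<subseteq> range \<sigma>\<close> \<sigma>S by fastforce
  then have "s \<in> S" unfolding s_def by blast
  have ue: "ultrametric_on M e" and eS: "\<And>x y. x \<in> M \<Longrightarrow> y \<in> M \<Longrightarrow> e x y \<in> S"
    and e0: "\<And>x y. x \<notin> M \<or> y \<notin> M \<Longrightarrow> e x y = 0" and tope: "Metric_space.mtopology M e = X"
    using assms(4) unfolding Ult_def M_def by auto
  interpret E: Metric_space M e using ue by (rule ultrametric_on_Metric_space)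
  have "compact_space E.mtopology" using assms(3) tope by simp
  then obtain C :: "nat \<Rightarrow> 'a set" where clopen: "\<And>k. openin E.mtopology (C k)" "\<And>k. closedin E.mtopology (C k)"
    and fine: "\<And>x \<rho>. x \<in> M \<Longrightarrow> 0 < \<rho> \<Longrightarrow> \<exists>k. x \<in> C k \<and> C k \<subseteq> E.mball x \<rho>"
    using compact_ultrametric_obtains_clopen_balls[OF ue] by metis
  define t where "t = code_dist \<tau> C"
  have separating: "\<And>x y. x \<in> M \<Longrightarrow> y \<in> M \<Longrightarrow> x \<noteq> y \<Longrightarrow> \<exists>k. (x \<in> C k) \<noteq> (y \<in> C k)"
    using E.fine_family_separating[OF fine] by blast
  have ut: "ultrametric_on M t" unfolding t_def using \<tau> separating by (rule ultrametric_on_code_dist)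
  have topt: "Metric_space.mtopology M t = E.mtopology"
    unfolding t_def using \<tau> clopen fine by (rule E.mtopology_code_dist)
  have t_le: "t x y \<le> s" for x y unfolding t_def s_def using \<tau> by (rule code_dist_le_first)
  define d where "d = splice_dist M s e t"
  have ud: "ultrametric_on M d" unfolding d_def using ue ut t_le by (rule ultrametric_on_splice_dist)
  have "d \<in> Ult X S"
    unfolding Ult_def
  proof (intro CollectI conjI ballI allI impI)
    show "d x y \<in> S" if "x \<in> topspace X" "y \<in> topspace X" for x y
      using that eS \<open>range \<tau> \<subseteq> S\<close> assms(1) code_dist_in[of \<tau> C x y]
      unfolding d_def splice_dist_def t_def M_def range_set_def by auto
    show "d x y = 0" if "x \<notin> topspace X \<or> y \<notin> topspace X" for x y
      using that unfolding d_def splice_dist_def M_def by auto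
    show "Metric_space.mtopology (topspace X) d = X"
      unfolding d_def M_def[symmetric] using mtopology_splice_dist[OF ue ut t_le \<open>0 < s\<close> topt] tope by simp
  qed (use ud M_def in simp)
  moreover have "UD X S e d < ereal r"
  proof -
    have "UD X S e d \<le> ereal s"
      unfolding d_def M_def using \<open>s \<in> S\<close> t_le E.nonneg by (rule UD_splice_dist_le)
    with \<open>\<tau> 0 < r\<close> show ?thesis unfolding s_def by (simp add: le_less_trans)
  qed
  moreover have "doubling_on M d"
  proof -
    have "E.mtotally_bounded M" using \<open>compact_space E.mtopology\<close> E.compact_space_eq_mcomplete_mtotally_bounded by blast
    then have "\<exists>K. finite K \<and> K \<subseteq> M \<and> M \<subseteq> (\<Union>x\<in>K. E.mball x s)"
      using \<open>0 < s\<close> unfolding E.mtotally_bounded_def by simp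
    then obtain K where K: "finite K" "K \<subseteq> M" "M \<subseteq> (\<Union>k\<in>K. E.mball k s)" by (elim exE conjE)
    show ?thesis
    proof (rule doubling_on_if_finite_cover[OF ultrametric_on_Metric_space[OF ud] K(1,3)])
      fix k B assume "k \<in> K" and B: "B \<subseteq> M \<inter> E.mball k s" "finite B" "2 \<le> card B"
      have "d a b = t a b" if "a \<in> B" "b \<in> B" for a b
      proof -
        have "e a b \<le> max (e a k) (e k b)"
          by (rule ultrametric_onD[OF ue]) (use that B(1) K(2) \<open>k \<in> K\<close> in auto)
        moreover have "e k a < s" "e k b < s" using that B(1) by auto
        ultimately have "e a b < s" by (simp add: E.commute)
        then show ?thesis using that B(1) unfolding d_def splice_dist_def by auto
      qed
      then have "aspect_ratio d B = aspect_ratio t B" by (rule aspect_ratio_cong)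
      moreover have "real (card B) \<le> 2 * aspect_ratio t B"
        unfolding t_def using \<tau> halving B(2,3)
      proof (rule card_le_code_dist_aspect_ratio)
        show "\<exists>k. (x \<in> C k) \<noteq> (y \<in> C k)" if "x \<in> B" "y \<in> B" "x \<noteq> y" for x y
          using separating[of x y] that B(1) by blast
      qed
      ultimately show "real (card B) \<le> 2 * aspect_ratio d B" by simp
    qed simp
  qed
  ultimately show ?thesis unfolding M_def by (intro bexI[of _ d]) simp_all
qed

lemma compact_imp_doubling_dense:
  fixes X :: "'a topology"
  assumes "range_set S" "countable_coinitiality S" "compact_space X"
  shows "ud_topology X S closure_of {d \<in> Ult X S. doubling_on (topspace X) d} = topspace (ud_topology X S)"
proof (rule subset_antisym[OF closure_of_subset_topspace subsetI])
  fix e assume "e \<in> topspace (ud_topology X S)"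
  then have "e \<in> Ult X S" by (simp add: topspace_ud_topology)
  have "\<exists>d. d \<in> {d \<in> Ult X S. doubling_on (topspace X) d} \<and> d \<in> T"
    if T: "e \<in> T" "openin (ud_topology X S) T" for T
  proof -
    obtain r where "0 < r" "{d \<in> Ult X S. UD X S e d < ereal r} \<subseteq> T"
      using T unfolding openin_ud_topology ud_open_def by blast
    with compact_imp_doubling_approximation[OF assms \<open>e \<in> Ult X S\<close> \<open>0 < r\<close>] show ?thesis by blast
  qed
  with \<open>e \<in> topspace (ud_topology X S)\<close> show "e \<in> ud_topology X S closure_of {d \<in> Ult X S. doubling_on (topspace X) d}"
    unfolding in_closure_of by blast
qed

theorem theorem1p3:
  fixes X :: "'a topology" and S :: "real set"
  assumes "range_set S" and "countable_coinitiality S" and "ultrametrizable_space X"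
  shows "compact_space X \<longleftrightarrow>
    (let D = {d \<in> Ult X S. doubling_on (topspace X) d} in
       (ud_topology X S) closure_of D = topspace (ud_topology X S)
       \<and> fsigma_in (ud_topology X S) D)"
  unfolding Let_def
  using compact_imp_doubling_dense[OF assms(1,2)] noncompact_imp_doubling_not_dense[OF assms]
    fsigma_in_doubling_metrics by blast

end
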